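(* Let $G$ be an ordered abelian group, $\beta_0,\beta_1,c\in G$, $\lambda$ a limit ordinal, and $(\gamma_{0,j})_{j<\lambda}$ a well-ordered, monotone increasing family of elements $\ge0$ of $G$ without last element; set $\gamma_{1,j}=\gamma_{0,j}+c$ for $j<\lambda$. Then there exist a subset $A\subset[1,\lambda)$ and a map $\sigma:A\to[1,\lambda)$ such that $\beta_0+\gamma_{0,j_0}\neq\beta_1+\gamma_{1,j_1}$ for all $j_0,j_1<\lambda$ satisfying $j_1\neq\sigma(j_0)$ whenever $j_0\in A$. *)

theory Defs
  imports Main
begin

(* Ordinals are modelled as elements of a well-ordered type 'i.
   The least element of 'i plays the role of the ordinal 0. *)
definition ord_zero :: "'i::wellorder" where
  "ord_zero = (LEAST x. True)"

definition is_limit :: "'i::wellorder \<Rightarrow> bool" where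
  "is_limit lam \<longleftrightarrow> ord_zero < lam \<and> (\<forall>j<lam. \<exists>k. j < k \<and> k < lam)"

definition ord_interval1 :: "'i::wellorder \<Rightarrow> 'i set" where
  "ord_interval1 lam = {j. ord_zero < j \<and> j < lam}"

end

theory Submission
  imports Defs
begin

lemma exists_map_to_unique_partner:
  assumes unique: "\<And>x y y'. x \<in> X \<Longrightarrow> y \<in> Y \<Longrightarrow> y' \<in> Y \<Longrightarrow> R x y \<Longrightarrow> R x y' \<Longrightarrow> y = y'"
  shows "\<exists>A \<sigma>. A \<subseteq> X \<and> \<sigma> ` A \<subseteq> Y \<and>
           (\<forall>x\<in>X. \<forall>y\<in>Y. (x \<in> A \<longrightarrow> y \<noteq> \<sigma> x) \<longrightarrow> \<not> R x y)"
proof -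
  define A where "A = {x \<in> X. \<exists>y\<in>Y. R x y}"
  define \<sigma> where "\<sigma> x = (SOME y. y \<in> Y \<and> R x y)" for x
  have \<sigma>: "\<sigma> x \<in> Y \<and> R x (\<sigma> x)" if "x \<in> A" for x
    using that unfolding A_def \<sigma>_def by (auto intro: someI2_ex)
  have "\<not> R x y" if "x \<in> X" "y \<in> Y" "x \<in> A \<longrightarrow> y \<noteq> \<sigma> x" for x y
  proof
    assume "R x y"
    with that have "x \<in> A" unfolding A_def by blast
    with \<sigma> unique \<open>R x y\<close> that show False by blast
  qed
  moreover have "A \<subseteq> X" "\<sigma> ` A \<subseteq> Y"
    using \<sigma> unfolding A_def by blast+
  ultimately show ?thesis by blast
qed

theorem lemma1p2:
  fixes \<beta>0 \<beta>1 c :: "'g::linordered_ab_group_add"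
    and lam :: "'i::wellorder"
    and \<gamma>0 :: "'i \<Rightarrow> 'g"
  assumes "is_limit lam"
    and "strict_mono_on (ord_interval1 lam) \<gamma>0"
    and "\<forall>j\<in>ord_interval1 lam. 0 \<le> \<gamma>0 j"
  shows "\<exists>A \<sigma>. A \<subseteq> ord_interval1 lam \<and> \<sigma> ` A \<subseteq> ord_interval1 lam \<and>
           (\<forall>j0\<in>ord_interval1 lam. \<forall>j1\<in>ord_interval1 lam.
              (j0 \<in> A \<longrightarrow> j1 \<noteq> \<sigma> j0) \<longrightarrow>
              \<beta>0 + \<gamma>0 j0 \<noteq> \<beta>1 + (\<gamma>0 j1 + c))"
proof (rule exists_map_to_unique_partner)
  have "inj_on \<gamma>0 (ord_interval1 lam)"
    using assms(2) by (rule strict_mono_on_imp_inj_on)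
  then show "j1 = j1'"
    if "j1 \<in> ord_interval1 lam" "j1' \<in> ord_interval1 lam"
      and "\<beta>0 + \<gamma>0 j0 = \<beta>1 + (\<gamma>0 j1 + c)" "\<beta>0 + \<gamma>0 j0 = \<beta>1 + (\<gamma>0 j1' + c)"
    for j0 j1 j1'
    using that by (auto dest: inj_onD)
qed

end
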